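(* Let $p$ be an odd prime, $\tau\in\mathbb{Z}$, and let $m=p^\alpha a$, $l=p^\beta b$ with positive integers $a,b$ such that $p\nmid a$, $p\nmid b$, and integers $\alpha\ge1$, $\beta\ge0$. Then $$p^{2\alpha}\ \Big|\ \binom{m}{l}\binom{m\tau+l-1}{m-1}-\binom{m/p}{l/p}\binom{\frac{m\tau+l}{p}-1}{\frac{m}{p}-1},$$ where, when $\beta=0$, the second term is defined to be zero.
   Context: For integers $b\geq 0$ and $a\in\mathbb{Z}$ the binomial coefficient is defined by: $\binom{a}{b}=1$ if $b=0$; $\binom{a}{b}$ is the usual binomial coefficient if $b\geq 1$ and $a\geq 0$; and $\binom{a}{b}=(-1)^b\binom{-a+b-1}{b}$ if $b\geq1$ and $a<0$. *)

theory Defs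
  imports Main "HOL-Computational_Algebra.Primes"
begin

definition ibinom :: "int \<Rightarrow> nat \<Rightarrow> int" where
  "ibinom a b = (if b = 0 then 1
                 else if a \<ge> 0 then int (nat a choose b)
                 else (-1) ^ b * int (nat (- a + int b - 1) choose b))"

end

theory Submission
  imports Defs "HOL-Computational_Algebra.Polynomial"
begin

text \<open>Write \<open>(p n)! = p\<^sup>n n! P(n)\<close>, where \<open>P(n)\<close> is the product of the integers in \<open>[1, p n]\<close>
  prime to \<open>p\<close>. This turns \<open>(p M choose p L)\<close> and \<open>(p N - 1 choose p M - 1)\<close> into
  \<open>(M choose L)\<close> and \<open>(N - 1 choose M - 1)\<close> up to the unit \<open>P(N) / (P(L) P(M - L) P(N - M))\<close>, so it
  suffices to show that this unit is \<open>1\<close> to sufficient \<open>p\<close>-adic precision; when \<open>\<beta> < \<alpha>\<close> the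
  binomial coefficients themselves supply the missing powers of \<open>p\<close>. The precision comes from a
  Jacobsthal-type estimate: shifting a block of length \<open>w\<close> with \<open>p\<^sup>j | w\<close> by \<open>p u\<close> with \<open>p\<^sup>i | u\<close>
  changes its product by a multiple of \<open>p\<^bsup>2+i+j\<^esup>\<close>. For \<open>j = 0\<close> it suffices to look at one
  factor \<open>(x + 1) \<cdots> (x + p - 1)\<close>, whose symmetry \<open>x \<mapsto> -p - x\<close> makes its derivative vanish
  mod \<open>p\<close>; the induction on \<open>j\<close> uses a second-order Taylor expansion and
  \<open>p | 0 + 1 + \<dots> + (p - 1)\<close>.
  Finally, \<open>ibinom a k\<close> mod \<open>Q\<close> depends only on \<open>a\<close> mod \<open>k! Q\<close>, which reduces arbitrary \<open>\<tau>\<close>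
  to positive ones.\<close>

section \<open>Finite differences of polynomials\<close>

lemma dvd_poly_diff:
  fixes f :: "'a::comm_ring_1 poly"
  shows "s dvd poly f (x + s) - poly f x"
proof (induction f)
  case (pCons c f)
  then obtain k where "poly f (x + s) - poly f x = s * k" by blast
  then have "poly (pCons c f) (x + s) - poly (pCons c f) x = s * (x * k + poly f (x + s))"
    by (simp add: algebra_simps)
  then show ?case by simp
qed simp

lemma poly_taylor_remainder_dvd:
  fixes f :: "'a::idom poly"
  shows "t\<^sup>2 dvd poly f (x + t) - poly f x - t * poly (pderiv f) x"
proof (induction f)
  case (pCons c f)
  then obtain k where k: "poly f (x + t) - poly f x - t * poly (pderiv f) x = t\<^sup>2 * k" by blast
  obtain k' where k': "poly f (x + t) - poly f x = t * k'" using dvd_poly_diff by blast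
  have "poly (pCons c f) (x + t) - poly (pCons c f) x - t * poly (pderiv (pCons c f)) x
      = x * (poly f (x + t) - poly f x - t * poly (pderiv f) x) + t * (poly f (x + t) - poly f x)"
    by (simp add: pderiv_pCons algebra_simps)
  also have "\<dots> = t\<^sup>2 * (x * k + k')"
    unfolding k unfolding k' by (simp add: algebra_simps power2_eq_square)
  finally show ?case by simp
qed simp

lemma poly_second_difference_dvd:
  fixes f :: "'a::comm_ring_1 poly"
  shows "s * t dvd poly f (x + s + t) - poly f (x + t) - poly f (x + s) + poly f x"
proof (induction f)
  case (pCons c f)
  then obtain k where k: "poly f (x + s + t) - poly f (x + t) - poly f (x + s) + poly f x = s * t * k"
    by blast
  obtain k1 where k1: "poly f (x + s + t) - poly f (x + s) = t * k1"
    using dvd_poly_diff[of t f "x + s"] by blast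
  obtain k2 where k2: "poly f (x + s) - poly f x = s * k2"
    using dvd_poly_diff by blast
  have "poly (pCons c f) (x + s + t) - poly (pCons c f) (x + t) - poly (pCons c f) (x + s)
        + poly (pCons c f) x
      = (x + t) * (poly f (x + s + t) - poly f (x + t) - poly f (x + s) + poly f x)
        + s * (poly f (x + s + t) - poly f (x + s)) + t * (poly f (x + s) - poly f x)"
    by (simp add: algebra_simps)
  also have "\<dots> = s * t * ((x + t) * k + k1 + k2)"
    unfolding k k1 k2 by (simp add: algebra_simps)
  finally show ?case by simp
qed simp

lemma poly_second_difference_taylor_dvd:
  fixes f :: "'a::idom poly"
  shows "s * t\<^sup>2 dvd poly f (x + s + t) - poly f (x + t) - poly f (x + s) + poly f x
           - t * (poly (pderiv f) (x + s) - poly (pderiv f) x)"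
proof (induction f)
  case (pCons c f)
  then obtain k where k: "poly f (x + s + t) - poly f (x + t) - poly f (x + s) + poly f x
      - t * (poly (pderiv f) (x + s) - poly (pderiv f) x) = s * t\<^sup>2 * k"
    by blast
  obtain k1 where k1: "poly f (x + s + t) - poly f (x + s) - t * poly (pderiv f) (x + s) = t\<^sup>2 * k1"
    using poly_taylor_remainder_dvd[of t f "x + s"] by (auto simp: add.assoc)
  obtain k2 where k2: "poly f (x + s + t) - poly f (x + t) - poly f (x + s) + poly f x = s * t * k2"
    using poly_second_difference_dvd by blast
  have "poly (pCons c f) (x + s + t) - poly (pCons c f) (x + t) - poly (pCons c f) (x + s)
        + poly (pCons c f) x
        - t * (poly (pderiv (pCons c f)) (x + s) - poly (pderiv (pCons c f)) x)
      = x * (poly f (x + s + t) - poly f (x + t) - poly f (x + s) + poly f x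
             - t * (poly (pderiv f) (x + s) - poly (pderiv f) x))
        + s * (poly f (x + s + t) - poly f (x + s) - t * poly (pderiv f) (x + s))
        + t * (poly f (x + s + t) - poly f (x + t) - poly f (x + s) + poly f x)"
    by (simp add: pderiv_pCons algebra_simps)
  also have "\<dots> = s * t\<^sup>2 * (x * k + k1 + k2)"
    unfolding k unfolding k1 unfolding k2 by (simp add: algebra_simps power2_eq_square)
  finally show ?case by simp
qed simp

lemma sum_poly_shift_differences_dvd:
  fixes f :: "'a::idom poly"
  shows "s * t\<^sup>2 dvd (\<Sum>r<n. poly f (x + s + of_nat r * t) - poly f (x + of_nat r * t))
           - of_nat n * (poly f (x + s) - poly f x)
           - (poly (pderiv f) (x + s) - poly (pderiv f) x) * t * (\<Sum>r<n. of_nat r)"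
proof -
  define c where "c = poly (pderiv f) (x + s) - poly (pderiv f) x"
  have "s * t\<^sup>2 dvd poly f (x + s + of_nat r * t) - poly f (x + of_nat r * t) - poly f (x + s)
      + poly f x - of_nat r * t * c" for r
  proof -
    have "s * t\<^sup>2 dvd s * (of_nat r * t)\<^sup>2"
      by (simp add: power_mult_distrib)
    moreover have "s * (of_nat r * t)\<^sup>2 dvd poly f (x + s + of_nat r * t) - poly f (x + of_nat r * t)
        - poly f (x + s) + poly f x - of_nat r * t * c"
      unfolding c_def by (rule poly_second_difference_taylor_dvd)
    ultimately show ?thesis
      by (rule dvd_trans)
  qed
  then have "s * t\<^sup>2 dvd (\<Sum>r<n. poly f (x + s + of_nat r * t) - poly f (x + of_nat r * t)
      - poly f (x + s) + poly f x - of_nat r * t * c)"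
    by (rule dvd_sum)
  then show ?thesis
    by (simp add: c_def sum_subtractf sum.distrib sum_distrib_left sum_distrib_right algebra_simps)
qed

section \<open>Products of perturbed factors\<close>

lemma dvd_prod_diff:
  fixes f g :: "nat \<Rightarrow> 'a::comm_ring_1"
  assumes "\<And>r. r < n \<Longrightarrow> Q dvd f r - g r"
  shows "Q dvd (\<Prod>r<n. f r) - (\<Prod>r<n. g r)"
  using assms
proof (induction n)
  case (Suc n)
  have "(\<Prod>r<Suc n. f r) - (\<Prod>r<Suc n. g r)
      = ((\<Prod>r<n. f r) - (\<Prod>r<n. g r)) * f n + (\<Prod>r<n. g r) * (f n - g n)"
    by (simp add: algebra_simps)
  then show ?case
    using Suc by (simp add: dvd_add dvd_mult dvd_mult2)
qed simp

text \<open>First-order expansion of a product of perturbed factors, multiplied through by \<open>A 0\<close>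
  to avoid dividing by it.\<close>

lemma prod_perturbation_dvd:
  fixes A B :: "nat \<Rightarrow> 'a::comm_ring_1"
  assumes "T \<ge> 1"
    and B: "\<And>r. r < n \<Longrightarrow> Q ^ T dvd B r - A r"
    and A: "\<And>r. r < n \<Longrightarrow> Q dvd A r - A 0"
  shows "Q ^ (T + 1) dvd A 0 * ((\<Prod>r<n. B r) - (\<Prod>r<n. A r)) - (\<Sum>r<n. B r - A r) * A 0 ^ n"
  using B A
proof (induction n)
  case (Suc n)
  define X where "X = (\<Prod>r<n. A r)"
  define Y where "Y = (\<Prod>r<n. B r)"
  define S where "S = (\<Sum>r<n. B r - A r)"
  have IH: "Q ^ (T + 1) dvd A 0 * (Y - X) - S * A 0 ^ n"
    using Suc unfolding X_def Y_def S_def by simp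
  have "Q ^ T dvd S"
    unfolding S_def using Suc.prems by (auto intro!: dvd_sum)
  moreover have "Q dvd B n - A 0"
  proof -
    have "Q dvd Q ^ T"
      using \<open>T \<ge> 1\<close> by (cases T) auto
    then have "Q dvd B n - A n"
      using Suc.prems(1) by (meson dvd_trans lessI)
    moreover have "Q dvd A n - A 0"
      using Suc.prems(2) by simp
    ultimately have "Q dvd (B n - A n) + (A n - A 0)"
      by (rule dvd_add)
    then show ?thesis by simp
  qed
  ultimately have S_term: "Q ^ (T + 1) dvd S * (B n - A 0)"
    unfolding power_add power_one_right by (rule mult_dvd_mono)
  have "Q dvd X - (\<Prod>r<n. A 0)"
    unfolding X_def using Suc.prems by (intro dvd_prod_diff) simp
  then have "Q dvd X - A 0 ^ n"
    by simp
  then have X_term: "Q ^ (T + 1) dvd (B n - A n) * (X - A 0 ^ n)"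
    unfolding power_add power_one_right using Suc.prems(1) by (simp add: mult_dvd_mono)
  have "A 0 * ((\<Prod>r<Suc n. B r) - (\<Prod>r<Suc n. A r)) - (\<Sum>r<Suc n. B r - A r) * A 0 ^ Suc n
      = (A 0 * (Y - X) - S * A 0 ^ n) * B n + S * (B n - A 0) * A 0 ^ n
        + A 0 * ((B n - A n) * (X - A 0 ^ n))"
    unfolding X_def Y_def S_def by (simp add: algebra_simps)
  then show ?case using IH S_term X_term by (simp add: dvd_add dvd_mult dvd_mult2)
qed simp

lemma dvd_prod_diff_of_dvd_sum:
  fixes A B :: "nat \<Rightarrow> 'a::comm_ring_1"
  assumes "T \<ge> 1"
    and "\<And>r. r < n \<Longrightarrow> Q ^ T dvd B r - A r"
    and "\<And>r. r < n \<Longrightarrow> Q dvd A r - A 0"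
    and "Q ^ (T + 1) dvd (\<Sum>r<n. B r - A r)"
  shows "Q ^ (T + 1) dvd A 0 * ((\<Prod>r<n. B r) - (\<Prod>r<n. A r))"
proof -
  have "Q ^ (T + 1) dvd (A 0 * ((\<Prod>r<n. B r) - (\<Prod>r<n. A r)) - (\<Sum>r<n. B r - A r) * A 0 ^ n)
      + (\<Sum>r<n. B r - A r) * A 0 ^ n"
    using prod_perturbation_dvd[of T n Q B A] assms by (intro dvd_add dvd_mult2) simp_all
  then show ?thesis
    by simp
qed

section \<open>Prime powers dividing binomial coefficients\<close>

lemma prime_power_dvd_mult_cancel:
  fixes p :: "'a::factorial_semiring_gcd"
  assumes "prime p" "\<not> p dvd c" "p ^ n dvd c * x"
  shows "p ^ n dvd x"
proof -
  have "coprime (p ^ n) c"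
    using prime_imp_power_coprime[OF assms(1,2)] by (simp add: coprime_commute)
  then show ?thesis
    using assms(3) coprime_dvd_mult_right_iff by blast
qed

lemma prime_power_dvd_cancel:
  fixes p :: "'a::factorial_semiring_gcd"
  assumes "prime p" "\<not> p dvd c" "p ^ e dvd p ^ s * c * x"
  shows "p ^ (e - s) dvd x"
proof (cases "s \<le> e")
  case True
  then have "p ^ s * p ^ (e - s) dvd p ^ s * (c * x)"
    using assms(3) by (simp add: power_add[symmetric] mult.assoc)
  then have "p ^ (e - s) dvd c * x"
    using assms(1) by (simp add: dvd_times_left_cancel_iff)
  then show ?thesis
    by (rule prime_power_dvd_mult_cancel[OF assms(1,2)])
qed simp

lemma prime_power_dvd_binomial:
  fixes p :: nat
  assumes "prime p" "p ^ e dvd M" "\<not> p dvd c"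
  shows "p ^ (e - s) dvd M choose (p ^ s * c)"
proof -
  have "c \<noteq> 0"
    using assms(3) by (metis dvd_0_right)
  then have "p ^ s * c = Suc (p ^ s * c - 1)"
    using prime_gt_0_nat[OF assms(1)] by simp
  then have "p ^ s * c * (M choose (p ^ s * c)) = M * ((M - 1) choose (p ^ s * c - 1))"
    using binomial_absorption by metis
  then have "p ^ e dvd p ^ s * c * (M choose (p ^ s * c))"
    using assms(2) by simp
  then show ?thesis
    by (rule prime_power_dvd_cancel[OF assms(1,3)])
qed

lemma prime_power_dvd_binomial_pred:
  fixes p :: nat
  assumes "prime p" "p ^ e dvd M" "M \<ge> 1" "\<not> p dvd c"
  shows "p ^ (e - s) dvd (p ^ s * c - 1) choose (M - 1)"
proof -
  have "M * (p ^ s * c choose M) = p ^ s * c * ((p ^ s * c - 1) choose (M - 1))"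
    using binomial_absorption[of "M - 1"] assms(3) by simp
  then have "p ^ e dvd p ^ s * c * ((p ^ s * c - 1) choose (M - 1))"
    using assms(2) by (metis dvd_mult2)
  then show ?thesis
    by (rule prime_power_dvd_cancel[OF assms(1,4)])
qed

lemma int_power_dvd_int_iff: "int p ^ k dvd int n \<longleftrightarrow> p ^ k dvd n"
  by (simp flip: of_nat_power)

lemma prime_power_dvd_binomial_product:
  fixes p :: nat
  assumes "prime p" "M = p ^ e * a" "L = p ^ s * b" "\<not> p dvd a" "\<not> p dvd b"
  shows "p ^ (2 * (e - s)) dvd (M choose L) * ((M * t + L - 1) choose (M - 1))"
proof (cases "s < e")
  case True
  define c where "c = p ^ (e - s) * a * t + b"
  have "M * t + L = p ^ s * c"
    using True by (simp add: assms(2,3) c_def algebra_simps power_add[symmetric])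
  moreover have "\<not> p dvd c"
    using True assms(5) by (simp add: c_def dvd_add_right_iff)
  moreover have "a > 0"
    by (rule ccontr) (use assms(4) in simp)
  then have "M \<ge> 1"
    using assms(1,2) by (simp add: Suc_le_eq prime_gt_0_nat)
  ultimately have "p ^ (e - s) dvd (M * t + L - 1) choose (M - 1)"
    using prime_power_dvd_binomial_pred[OF assms(1)] assms(2) by simp
  moreover have "p ^ (e - s) dvd M choose L"
    using prime_power_dvd_binomial[OF assms(1) _ assms(5)] assms(2,3) by simp
  ultimately show ?thesis
    by (simp add: mult_2 power_add mult_dvd_mono)
qed simp

section \<open>Integer binomial coefficients\<close>

text \<open>\<open>ibinom a k\<close> is the library's \<open>a gchoose k\<close> on \<open>int\<close>, but that equation cannot be stated
  here: in this theory context \<open>gchoose\<close> carries the sort constraint \<open>field_char_0\<close>.\<close>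

lemma fact_mult_ibinom: "fact k * ibinom a k = (\<Prod>i<k. a - int i)"
proof -
  have "a < 0 \<Longrightarrow> nat (- a + int k - 1) = k + nat (- a) - 1"
    by arith
  then have "ibinom a k = (if 0 \<le> a then int (nat a choose k)
                      else (-1) ^ k * int ((k + nat (- a) - 1) choose k))"
    by (simp add: ibinom_def)
  then show ?thesis
    using gbinomial_int_mult_fact[of k a] gbinomial_int_binomial[of a k]
    by (simp add: atLeast0LessThan)
qed

lemma ibinom_of_nat [simp]: "ibinom (int n) k = int (n choose k)"
  by (simp add: ibinom_def)

lemma ibinom_product_eq_binomial:
  assumes "M \<ge> 1" "t \<ge> 1"
  shows "ibinom (int M) L * ibinom (int M * int t + int L - 1) (M - 1)
           = int ((M choose L) * ((M * t + L - 1) choose (M - 1)))"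
proof -
  have "int M * int t + int L - 1 = int (M * t + L - 1)"
    using assms by (simp add: of_nat_diff Suc_le_eq)
  then show ?thesis
    by simp
qed

lemma ibinom_product_div_eq_binomial:
  fixes q :: int
  assumes "q > 0" "m = q * int M" "l = q * int L" "M \<ge> 1" "t \<ge> 1"
  shows "ibinom (m div q) (nat (l div q)) * ibinom ((m * int t + l) div q - 1) (nat (m div q - 1))
           = int ((M choose L) * ((M * t + L - 1) choose (M - 1)))"
proof -
  have "m * int t + l = q * (int M * int t + int L)"
    by (simp add: assms(2,3) algebra_simps)
  then have args: "m div q = int M" "l div q = int L" "(m * int t + l) div q = int M * int t + int L"
    using assms(1) by (simp_all add: assms(2,3))
  have "nat (int M - 1) = M - 1"
    by simp
  then show ?thesis
    unfolding args nat_int by (simp only: ibinom_product_eq_binomial[OF assms(4,5)])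
qed

lemma ibinom_shift_dvd:
  assumes "fact k * Q dvd h"
  shows "Q dvd ibinom (a + h) k - ibinom a k"
proof -
  define F :: "int poly" where "F = (\<Prod>i<k. [:- int i, 1:])"
  have falling: "fact k * ibinom x k = poly F x" for x
    by (simp add: F_def fact_mult_ibinom poly_prod)
  obtain r where r: "poly F (a + h) - poly F a = h * r"
    using dvd_poly_diff by blast
  obtain h' where h': "h = fact k * Q * h'"
    using assms by blast
  have "fact k * (ibinom (a + h) k - ibinom a k) = poly F (a + h) - poly F a"
    by (simp add: falling right_diff_distrib)
  also have "\<dots> = fact k * (Q * h' * r)"
    unfolding r unfolding h' by (simp add: ac_simps)
  finally show ?thesis
    by simp
qed

lemma ibinom_shift_dvd_fact:
  assumes "k \<le> n" "fact n * Q dvd h"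
  shows "Q dvd ibinom (x + h) k - ibinom x k"
proof (rule ibinom_shift_dvd)
  have "fact k * Q dvd fact n * Q"
    using assms(1) by (simp add: fact_dvd)
  then show "fact k * Q dvd h"
    using assms(2) by (rule dvd_trans)
qed

lemma dvd_diff_transfer:
  fixes Q :: "'a::comm_ring_1"
  assumes "Q dvd x' - x" "Q dvd z' - z" "Q dvd c * x' - z'"
  shows "Q dvd c * x - z"
proof -
  have "Q dvd (c * x' - z') - c * (x' - x) + (z' - z)"
    using dvd_add[OF dvd_diff[OF assms(3) dvd_mult[OF assms(1)]] assms(2)] .
  then show ?thesis
    by (simp add: algebra_simps)
qed

lemma pos_representative:
  fixes K :: int
  assumes "K > 0"
  obtains t :: nat and d where "t \<ge> 1" "int t = x + K * d"
proof
  have "0 \<le> x mod K"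
    using assms by simp
  then show "nat (x mod K + K) \<ge> 1" "int (nat (x mod K + K)) = x + K * (1 - x div K)"
    using assms minus_mult_div_eq_mod[of x K] by (linarith, simp add: algebra_simps)
qed

lemma ibinom_upper_periodic:
  fixes m l x d Q :: int
  shows "Q dvd ibinom (m * (x + fact (nat m) * Q * d) + l - 1) (nat (m - 1))
                - ibinom (m * x + l - 1) (nat (m - 1))"
proof -
  have shift: "m * (x + fact (nat m) * Q * d) + l - 1 = (m * x + l - 1) + fact (nat m) * Q * (m * d)"
    by (simp add: algebra_simps)
  show ?thesis
    unfolding shift by (rule ibinom_shift_dvd_fact[where n = "nat m"]) simp_all
qed

lemma ibinom_upper_div_periodic:
  fixes q m l x d Q :: int
  assumes "q > 0" "q dvd m" "m \<ge> 0"
  shows "Q dvd ibinom ((m * (x + fact (nat m) * Q * d) + l) div q - 1) (nat (m div q - 1))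
                - ibinom ((m * x + l) div q - 1) (nat (m div q - 1))"
proof -
  obtain m' where m: "m = q * m'"
    using assms(2) by blast
  have shift: "(m * (x + fact (nat m) * Q * d) + l) div q - 1
      = ((m * x + l) div q - 1) + fact (nat m) * Q * (m' * d)"
  proof -
    have "m * (x + fact (nat m) * Q * d) + l = (m * x + l) + q * (fact (nat m) * Q * (m' * d))"
      by (simp add: m algebra_simps)
    then show ?thesis
      using assms(1) by (simp only:) simp
  qed
  have "m div q - 1 \<le> m"
    using assms(3) int_div_le_self[of m q] by (cases "m = 0") simp_all
  then show ?thesis
    unfolding shift by (intro ibinom_shift_dvd_fact[where n = "nat m"]) simp_all
qed

section \<open>Products of the units in blocks of length \<open>p\<close>\<close>

locale odd_prime =
  fixes p :: nat
  assumes prime: "prime p" and odd: "odd p"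
begin

lemma p_ge_3: "p \<ge> 3"
proof -
  have "p \<ge> 2" "p \<noteq> 2"
    using prime prime_ge_2_nat odd by auto
  then show ?thesis
    by simp
qed

lemma prime_int: "prime (int p)"
  using prime by simp

lemma not_dvd_2: "\<not> int p dvd 2"
  using p_ge_3 by (auto dest: zdvd_imp_le)

definition block_poly :: "int poly" where
  "block_poly = (\<Prod>i<p - 1. [:int i + 1, 1:])"

lemma poly_block_poly: "poly block_poly x = pochhammer (x + 1) (p - 1)"
  by (simp add: block_poly_def poly_prod pochhammer_prod atLeast0LessThan algebra_simps)

lemma block_poly_not_dvd: "\<not> int p dvd poly block_poly (int p * y)"
proof
  assume "int p dvd poly block_poly (int p * y)"
  moreover have "int p * y dvd poly block_poly (0 + int p * y) - poly block_poly 0"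
    by (rule dvd_poly_diff)
  then have "int p dvd poly block_poly (int p * y) - poly block_poly 0"
    by (auto intro: dvd_mult_left)
  ultimately have "int p dvd poly block_poly (int p * y) - (poly block_poly (int p * y) - poly block_poly 0)"
    by (rule dvd_diff)
  then have "int p dvd poly block_poly 0"
    by simp
  moreover have "poly block_poly 0 = fact (p - 1)"
    by (simp add: poly_block_poly pochhammer_fact)
  ultimately have "int p dvd int (fact (p - 1))"
    by simp
  then have "p dvd fact (p - 1)"
    by (simp only: of_nat_dvd_iff)
  then show False
    using prime prime_dvd_fact_iff p_ge_3 by simp
qed

lemma block_poly_reflect: "poly block_poly (- int p - x) = poly block_poly x"
proof -
  have "even (p - 1)"
    using odd p_ge_3 by simp
  then show ?thesis
    using pochhammer_minus[of "int p + x - 1" "p - 1"] p_ge_3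
    by (simp add: poly_block_poly of_nat_diff algebra_simps)
qed

lemma pderiv_block_poly_reflect:
  "poly (pderiv block_poly) (- int p - x) = - poly (pderiv block_poly) x"
proof -
  define q :: "int poly" where "q = [:- int p, -1:]"
  have "block_poly \<circ>\<^sub>p q = block_poly"
    by (rule poly_ext) (simp add: q_def poly_pcompose block_poly_reflect)
  moreover have "pderiv (block_poly \<circ>\<^sub>p q) = (pderiv block_poly \<circ>\<^sub>p q) * [:-1:]"
    by (simp add: q_def pderiv_pcompose pderiv_pCons)
  ultimately have "poly (pderiv block_poly) (- int p - x)
      = poly ((pderiv block_poly \<circ>\<^sub>p q) * [:-1:]) (- int p - x)"
    by simp
  then show ?thesis
    by (simp add: q_def poly_pcompose)
qed

text \<open>The symmetry \<open>x \<mapsto> -p - x\<close> of the roots makes the derivative vanish mod \<open>p\<close>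
  at the centre of symmetry, hence at every multiple of \<open>p\<close>.\<close>

lemma block_poly_deriv_dvd: "int p dvd poly (pderiv block_poly) (int p * y)"
proof -
  let ?G' = "poly (pderiv block_poly)"
  have "int p dvd ?G' (- int p + int p) - ?G' (- int p)"
    by (rule dvd_poly_diff)
  then have "int p dvd 2 * ?G' 0"
    using pderiv_block_poly_reflect[of 0] by simp
  then have "int p dvd ?G' 0"
    using not_dvd_2 prime_int by (simp add: prime_dvd_mult_iff)
  moreover have "int p * y dvd ?G' (0 + int p * y) - ?G' 0"
    by (rule dvd_poly_diff)
  then have "int p dvd ?G' (int p * y) - ?G' 0"
    by (auto intro: dvd_mult_left)
  ultimately have "int p dvd ?G' 0 + (?G' (int p * y) - ?G' 0)"
    by (rule dvd_add)
  then show ?thesis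
    by simp
qed

lemma block_poly_shift_dvd:
  assumes "int p ^ i dvd u"
  shows "int p ^ (2 + i) dvd poly block_poly (int p * (a + u)) - poly block_poly (int p * a)"
proof -
  define h where "h = int p * u"
  obtain k where k: "poly block_poly (int p * a + h) - poly block_poly (int p * a)
      - h * poly (pderiv block_poly) (int p * a) = h\<^sup>2 * k"
    using poly_taylor_remainder_dvd by blast
  obtain c where c: "poly (pderiv block_poly) (int p * a) = int p * c"
    using block_poly_deriv_dvd by blast
  obtain v where v: "u = int p ^ i * v"
    using assms by blast
  have "poly block_poly (int p * (a + u)) - poly block_poly (int p * a)
      = h * poly (pderiv block_poly) (int p * a) + h\<^sup>2 * k"
    using k by (simp add: h_def algebra_simps)
  also have "\<dots> = int p ^ (2 + i) * (v * c + int p ^ i * v\<^sup>2 * k)"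
    unfolding h_def c v by (simp add: algebra_simps power2_eq_square power_add)
  finally show ?thesis
    by simp
qed

lemma dvd_sum_residues: "int p dvd (\<Sum>r<p. int r)"
proof -
  have "2 * (\<Sum>r<n. int r) = int n * (int n - 1)" for n
    by (induction n) (auto simp: algebra_simps)
  then have "int p dvd 2 * (\<Sum>r<p. int r)"
    by simp
  then show ?thesis
    using not_dvd_2 prime_int by (simp add: prime_dvd_mult_iff)
qed

text \<open>The product of the integers in \<open>(p a, p (a + w)]\<close> that are prime to \<open>p\<close>.\<close>

definition block_prod :: "int \<Rightarrow> nat \<Rightarrow> int" where
  "block_prod a w = (\<Prod>k<w. poly block_poly (int p * (a + int k)))"

lemma block_prod_eq_poly:
  "block_prod a w = poly (\<Prod>k<w. block_poly \<circ>\<^sub>p [:int p * int k, 1:]) (int p * a)"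
  unfolding block_prod_def by (simp add: poly_prod poly_pcompose algebra_simps)

lemma block_prod_Suc: "block_prod a (Suc w) = block_prod a w * poly block_poly (int p * (a + int w))"
  by (simp add: block_prod_def)

lemma block_prod_add: "block_prod a (v + w) = block_prod a v * block_prod (a + int v) w"
  by (induction w) (simp_all add: block_prod_def algebra_simps)

lemma block_prod_mult: "block_prod a (n * w) = (\<Prod>r<n. block_prod (a + int r * int w) w)"
proof (induction n)
  case (Suc n)
  have "block_prod a (Suc n * w) = block_prod a (n * w + w)"
    by (simp add: add.commute)
  also have "\<dots> = block_prod a (n * w) * block_prod (a + int (n * w)) w"
    by (rule block_prod_add)
  finally have "block_prod a (Suc n * w) = block_prod a (n * w) * block_prod (a + int (n * w)) w" .
  then show ?case
    using Suc by simp
qed (simp add: block_prod_def)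

lemma block_prod_not_dvd: "\<not> int p dvd block_prod a w"
proof (induction w)
  case (Suc w)
  then show ?case
    using block_poly_not_dvd prime_int by (simp add: block_prod_Suc prime_dvd_mult_iff)
qed (use p_ge_3 in \<open>simp add: block_prod_def\<close>)

lemma block_prod_shift_dvd_base:
  assumes "int p ^ i dvd u"
  shows "int p ^ (2 + i) dvd block_prod (a + u) w - block_prod a w"
  unfolding block_prod_def
proof (rule dvd_prod_diff)
  fix k
  show "int p ^ (2 + i) dvd poly block_poly (int p * (a + u + int k))
      - poly block_poly (int p * (a + int k))"
    using block_poly_shift_dvd[OF assms, of "a + int k"] by (simp add: ac_simps)
qed

lemma sum_block_prod_shift_dvd:
  assumes "int p ^ i dvd u" "int p ^ j dvd int w"
  shows "int p ^ (3 + i + j) dvd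
           (\<Sum>r<p. block_prod (a + u + int r * int w) w - block_prod (a + int r * int w) w)
           - int p * (block_prod (a + u) w - block_prod a w)"
proof -
  define H where "H = (\<Prod>k<w. block_poly \<circ>\<^sub>p [:int p * int k, 1:])"
  define x where "x = int p * a"
  define s where "s = int p * u"
  define t where "t = int p * int w"
  define c where "c = poly (pderiv H) (x + s) - poly (pderiv H) x"
  obtain v where v: "u = int p ^ i * v"
    using assms(1) by blast
  obtain z where z: "int w = int p ^ j * z"
    using assms(2) by blast
  have "s * t\<^sup>2 = int p ^ (3 + i + j) * (int p ^ j * v * z\<^sup>2)"
    unfolding s_def t_def v z by (simp add: power2_eq_square power3_eq_cube power_add algebra_simps)
  then have quadratic: "int p ^ (3 + i + j) dvd s * t\<^sup>2"
    by simp
  have "s dvd c"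
    unfolding c_def using dvd_poly_diff[of s "pderiv H" x] by (simp add: add.commute)
  then have "int p ^ (1 + i) * v dvd c"
    unfolding s_def v by (simp add: mult.assoc)
  then have "int p ^ (1 + i) dvd c"
    by (rule dvd_mult_left)
  then have "int p ^ (1 + i) * (int p * int p ^ j) * int p dvd c * t * (\<Sum>r<p. int r)"
    using assms(2) dvd_sum_residues by (simp add: t_def mult_dvd_mono)
  then have linear: "int p ^ (3 + i + j) dvd c * t * (\<Sum>r<p. int r)"
    by (simp add: power_add power3_eq_cube algebra_simps)
  have "block_prod b w = poly H (int p * b)" for b
    unfolding H_def by (rule block_prod_eq_poly)
  then have "(\<Sum>r<p. block_prod (a + u + int r * int w) w - block_prod (a + int r * int w) w)
             - int p * (block_prod (a + u) w - block_prod a w)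
      = (\<Sum>r<p. poly H (x + s + int r * t) - poly H (x + int r * t)) - int p * (poly H (x + s) - poly H x)"
    by (simp add: x_def s_def t_def algebra_simps)
  moreover have "int p ^ (3 + i + j) dvd
      ((\<Sum>r<p. poly H (x + s + int r * t) - poly H (x + int r * t)) - int p * (poly H (x + s) - poly H x)
        - c * t * (\<Sum>r<p. int r)) + c * t * (\<Sum>r<p. int r)"
    using dvd_trans[OF quadratic sum_poly_shift_differences_dvd[where f = H and n = p]] linear
    unfolding c_def by (rule dvd_add)
  ultimately show ?thesis
    by simp
qed

text \<open>Split the range of length \<open>p w\<close> into \<open>p\<close> blocks of length \<open>w\<close>: the blockwise differences
  are already divisible by \<open>p\<^bsup>2+i+j\<^esup>\<close>, and their sum gains one more factor \<open>p\<close>.\<close>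

lemma block_prod_shift_dvd_step:
  assumes "int p ^ i dvd u" "int p ^ j dvd int w"
    and IH: "\<And>a. int p ^ (2 + i + j) dvd block_prod (a + u) w - block_prod a w"
  shows "int p ^ (3 + i + j) dvd block_prod (a + u) (p * w) - block_prod a (p * w)"
proof -
  define A where "A r = block_prod (a + int r * int w) w" for r
  define B where "B r = block_prod (a + u + int r * int w) w" for r
  have BA: "int p ^ (2 + i + j) dvd B r - A r" for r
    using IH[of "a + int r * int w"] by (simp add: A_def B_def ac_simps)
  have A: "int p dvd A r - A 0" for r
  proof -
    have "int p * int p dvd A r - A 0"
      using block_prod_shift_dvd_base[of 0 "int r * int w" a w] by (simp add: A_def power2_eq_square)
    then show ?thesis
      by (rule dvd_mult_left)
  qed
  have "int p * int p ^ (2 + i + j) dvd int p * (B 0 - A 0)"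
    using BA[of 0] by simp
  then have "int p ^ (3 + i + j) dvd ((\<Sum>r<p. B r - A r) - int p * (B 0 - A 0)) + int p * (B 0 - A 0)"
    using sum_block_prod_shift_dvd[OF assms(1,2)] by (intro dvd_add) (simp_all add: A_def B_def numeral_3_eq_3)
  then have "int p ^ (2 + i + j + 1) dvd (\<Sum>r<p. B r - A r)"
    by (simp add: numeral_3_eq_3)
  then have "int p ^ (2 + i + j + 1) dvd A 0 * ((\<Prod>r<p. B r) - (\<Prod>r<p. A r))"
    using BA A by (intro dvd_prod_diff_of_dvd_sum) simp_all
  then have "int p ^ (3 + i + j) dvd block_prod a w * ((\<Prod>r<p. B r) - (\<Prod>r<p. A r))"
    by (simp add: A_def numeral_3_eq_3)
  then have "int p ^ (3 + i + j) dvd (\<Prod>r<p. B r) - (\<Prod>r<p. A r)"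
    by (rule prime_power_dvd_mult_cancel[OF prime_int block_prod_not_dvd])
  then show ?thesis
    by (simp add: block_prod_mult A_def B_def)
qed

lemma block_prod_shift_dvd:
  assumes "int p ^ i dvd u" "int p ^ j dvd int w"
  shows "int p ^ (2 + i + j) dvd block_prod (a + u) w - block_prod a w"
  using assms(2)
proof (induction j arbitrary: a w)
  case 0
  then show ?case
    using block_prod_shift_dvd_base[OF assms(1)] by simp
next
  case (Suc j)
  have "int p dvd int p ^ Suc j"
    by simp
  then have "int p dvd int w"
    using Suc.prems by (rule dvd_trans)
  then obtain w' where w: "w = p * w'"
    by (auto simp: of_nat_dvd_iff)
  then have "int p ^ j dvd int w'"
    using Suc.prems p_ge_3 by simp
  then show ?case
    using block_prod_shift_dvd_step[OF assms(1) _ Suc.IH] by (simp add: w numeral_3_eq_3)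
qed

lemma fact_mult_prime: "fact (p * n) = int p ^ n * fact n * block_prod 0 n"
proof (induction n)
  case (Suc n)
  have "(fact (p * Suc n) :: int) = pochhammer 1 (p * n + p)"
    by (simp add: pochhammer_fact algebra_simps)
  also have "\<dots> = pochhammer 1 (p * n) * pochhammer (1 + int (p * n)) p"
    by (rule pochhammer_product')
  also have "pochhammer (1 + int (p * n)) p
      = (1 + int (p * n) + int (p - 1)) * pochhammer (1 + int (p * n)) (p - 1)"
    using p_ge_3 pochhammer_rec'[of "1 + int (p * n)" "p - 1"] by simp
  also have "\<dots> = int p * int (Suc n) * poly block_poly (int p * int n)"
    using p_ge_3 by (simp add: poly_block_poly of_nat_diff algebra_simps)
  also have "pochhammer 1 (p * n) = (fact (p * n) :: int)"
    by (simp add: pochhammer_fact)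
  finally show ?case
    using Suc by (simp add: block_prod_Suc algebra_simps)
qed (simp add: block_prod_def)

lemma block_prod_split_dvd:
  assumes "int p ^ i dvd int v" "int p ^ j dvd int w"
  shows "int p ^ (2 + i + j) dvd block_prod 0 (v + w) - block_prod 0 v * block_prod 0 w"
proof -
  have "block_prod 0 (v + w) - block_prod 0 v * block_prod 0 w
      = block_prod 0 v * (block_prod (0 + int v) w - block_prod 0 w)"
    by (simp add: block_prod_add algebra_simps)
  then show ?thesis
    using block_prod_shift_dvd[OF assms, of 0] by simp
qed

lemma block_prod_nonzero: "block_prod a w \<noteq> 0"
  using block_prod_not_dvd by (metis dvd_0_right)

section \<open>Binomial coefficients of multiples of \<open>p\<close>\<close>

lemma binomial_mult_prime:
  "int (p * M choose p * L) * block_prod 0 L * block_prod 0 (M - L)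
     = int (M choose L) * block_prod 0 M"
proof (cases "L \<le> M")
  case True
  define F :: int where "F = int p ^ M * fact L * fact (M - L)"
  have choose: "fact L * fact (M - L) * int (M choose L) = fact M"
    by (metis binomial_fact_lemma[OF True] of_nat_fact of_nat_mult)
  have "p * L \<le> p * M" "p * M - p * L = p * (M - L)"
    using True by (simp_all add: diff_mult_distrib2)
  then have choose_p: "fact (p * L) * fact (p * (M - L)) * int (p * M choose p * L) = fact (p * M)"
    by (metis binomial_fact_lemma of_nat_fact of_nat_mult)
  have "int p ^ M = int p ^ L * int p ^ (M - L)"
    using True by (simp add: power_add[symmetric])
  then have "F * (int (p * M choose p * L) * block_prod 0 L * block_prod 0 (M - L))
      = (int p ^ L * fact L * block_prod 0 L) * (int p ^ (M - L) * fact (M - L) * block_prod 0 (M - L))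
        * int (p * M choose p * L)"
    by (simp add: F_def ac_simps)
  also have "\<dots> = fact (p * L) * fact (p * (M - L)) * int (p * M choose p * L)"
    by (simp only: fact_mult_prime)
  also have "\<dots> = int p ^ M * (fact L * fact (M - L) * int (M choose L)) * block_prod 0 M"
    unfolding choose_p choose by (simp add: fact_mult_prime)
  also have "\<dots> = F * (int (M choose L) * block_prod 0 M)"
    by (simp add: F_def algebra_simps)
  finally show ?thesis
    using p_ge_3 by (simp add: F_def)
qed (use p_ge_3 in \<open>simp add: binomial_eq_0\<close>)

lemma binomial_pred_mult_prime:
  assumes "1 \<le> M" "M \<le> N"
  shows "int ((p * N - 1) choose (p * M - 1)) * block_prod 0 M * block_prod 0 (N - M)
           = int ((N - 1) choose (M - 1)) * block_prod 0 N"
proof -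
  have absorb: "int K * int (n choose K) = int n * int ((n - 1) choose (K - 1))"
    if "K \<ge> 1" for K n :: nat
    using binomial_absorption[of "K - 1" n] that by (metis Suc_pred' less_eq_Suc_le of_nat_mult One_nat_def)
  have "p * M \<ge> 1"
    using assms p_ge_3 by simp
  have "int (p * N) * (int ((p * N - 1) choose (p * M - 1)) * block_prod 0 M * block_prod 0 (N - M))
      = (int (p * M) * int (p * N choose p * M)) * block_prod 0 M * block_prod 0 (N - M)"
    by (simp only: absorb[OF \<open>p * M \<ge> 1\<close>] mult.assoc)
  also have "\<dots> = int p * int M * (int (N choose M) * block_prod 0 N)"
    by (simp add: binomial_mult_prime[symmetric] ac_simps)
  also have "\<dots> = int p * (int N * int ((N - 1) choose (M - 1))) * block_prod 0 N"
    by (simp only: absorb[OF assms(1), symmetric] ac_simps)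
  finally show ?thesis
    using assms p_ge_3 by (simp add: ac_simps)
qed

lemma block_prod_binomial_product:
  assumes "1 \<le> M" "M \<le> N"
  shows "int ((p * M choose p * L) * ((p * N - 1) choose (p * M - 1)))
           * (block_prod 0 L * block_prod 0 (M - L) * block_prod 0 (N - M))
         = int ((M choose L) * ((N - 1) choose (M - 1))) * block_prod 0 N"
proof -
  have "block_prod 0 M * (int ((p * M choose p * L) * ((p * N - 1) choose (p * M - 1)))
           * (block_prod 0 L * block_prod 0 (M - L) * block_prod 0 (N - M)))
      = (int (p * M choose p * L) * block_prod 0 L * block_prod 0 (M - L))
        * (int ((p * N - 1) choose (p * M - 1)) * block_prod 0 M * block_prod 0 (N - M))"
    by (simp add: ac_simps)
  also have "\<dots> = (int (M choose L) * block_prod 0 M) * (int ((N - 1) choose (M - 1)) * block_prod 0 N)"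
    by (simp only: binomial_mult_prime binomial_pred_mult_prime[OF assms])
  also have "\<dots> = block_prod 0 M * (int ((M choose L) * ((N - 1) choose (M - 1))) * block_prod 0 N)"
    by (simp add: ac_simps)
  finally show ?thesis
    using block_prod_nonzero by simp
qed

lemma block_prod_defect_dvd:
  assumes "L \<le> M" "M \<le> N" "r \<le> e" "p ^ e dvd M" "p ^ r dvd L" "p ^ r dvd N - M"
    and Y: "int p ^ (2 * (e - r)) dvd Y"
  shows "int p ^ (2 * (e + 1)) dvd
           Y * (block_prod 0 N - block_prod 0 L * block_prod 0 (M - L) * block_prod 0 (N - M))"
proof -
  have "p ^ r dvd M"
    using assms(3,4) le_imp_power_dvd dvd_trans by blast
  then have "p ^ r dvd M - L"
    using assms(5) by (rule dvd_diff_nat)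
  have "int p ^ (2 + e + r) dvd block_prod 0 (M + (N - M)) - block_prod 0 M * block_prod 0 (N - M)"
    using assms(4,6) by (intro block_prod_split_dvd) (simp_all add: int_power_dvd_int_iff)
  then have "int p ^ (2 * (e - r)) * int p ^ (2 + e + r) dvd
      Y * (block_prod 0 (M + (N - M)) - block_prod 0 M * block_prod 0 (N - M))"
    by (rule mult_dvd_mono[OF Y])
  moreover have "int p ^ (2 + r + r) dvd block_prod 0 (L + (M - L)) - block_prod 0 L * block_prod 0 (M - L)"
    using assms(5) \<open>p ^ r dvd M - L\<close> by (intro block_prod_split_dvd) (simp_all add: int_power_dvd_int_iff)
  then have "int p ^ (2 * (e - r)) * int p ^ (2 + r + r) dvd
      Y * block_prod 0 (N - M) * (block_prod 0 (L + (M - L)) - block_prod 0 L * block_prod 0 (M - L))"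
    using Y by (simp add: mult_dvd_mono mult.assoc)
  moreover have "2 * (e + 1) \<le> 2 * (e - r) + (2 + e + r)" "2 * (e + 1) \<le> 2 * (e - r) + (2 + r + r)"
    using assms(3) by simp_all
  ultimately have "int p ^ (2 * (e + 1)) dvd
      Y * (block_prod 0 (M + (N - M)) - block_prod 0 M * block_prod 0 (N - M))
      + Y * block_prod 0 (N - M) * (block_prod 0 (L + (M - L)) - block_prod 0 L * block_prod 0 (M - L))"
    unfolding power_add[symmetric] by (meson dvd_add le_imp_power_dvd dvd_trans)
  then show ?thesis
    using assms(1,2) by (simp add: algebra_simps)
qed

lemma binomial_product_congruence:
  assumes "M = p ^ e * a" "L = p ^ s * b" "\<not> p dvd a" "\<not> p dvd b" "t \<ge> 1"
  shows "int p ^ (2 * (e + 1)) dvd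
           int ((p * M choose p * L) * ((p * (M * t + L) - 1) choose (p * M - 1)))
           - int ((M choose L) * ((M * t + L - 1) choose (M - 1)))"
proof (cases "L \<le> M")
  case True
  define N where "N = M * t + L"
  define X where "X = int ((p * M choose p * L) * ((p * N - 1) choose (p * M - 1)))"
  define Y where "Y = int ((M choose L) * ((N - 1) choose (M - 1)))"
  define D where "D = block_prod 0 L * block_prod 0 (M - L) * block_prod 0 (N - M)"
  have "a > 0"
    by (rule ccontr) (use assms(3) in simp)
  then have "M \<ge> 1"
    using assms(1) prime by (simp add: Suc_le_eq prime_gt_0_nat)
  have "M \<le> N"
    unfolding N_def using assms(5) by (metis le_add1 mult_le_mono2 mult_1_right order_trans)
  have "X * D = Y * block_prod 0 N"
    unfolding X_def Y_def D_def by (rule block_prod_binomial_product[OF \<open>M \<ge> 1\<close> \<open>M \<le> N\<close>])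
  then have XY: "D * (X - Y) = Y * (block_prod 0 N - D)"
    by (simp add: algebra_simps)
  have Y: "int p ^ (2 * (e - min e s)) dvd Y"
    unfolding Y_def N_def int_power_dvd_int_iff
    using prime_power_dvd_binomial_product[OF prime assms(1-4)] by (simp add: min_def)
  have "N - M = M * (t - 1) + L"
    using assms(5) by (simp add: N_def diff_mult_distrib2)
  then have "p ^ min e s dvd N - M"
    using assms(1,2) by (simp add: le_imp_power_dvd dvd_mult2 dvd_add)
  then have "int p ^ (2 * (e + 1)) dvd Y * (block_prod 0 N - D)"
    unfolding D_def using block_prod_defect_dvd[OF True \<open>M \<le> N\<close> _ _ _ _ Y]
    by (simp add: assms(1,2) le_imp_power_dvd dvd_mult2)
  then have "int p ^ (2 * (e + 1)) dvd D * (X - Y)"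
    unfolding XY .
  moreover have "\<not> int p dvd D"
    using block_prod_not_dvd prime_int by (simp add: D_def prime_dvd_mult_iff)
  ultimately have "int p ^ (2 * (e + 1)) dvd X - Y"
    using prime_power_dvd_mult_cancel[OF prime_int] by blast
  then show ?thesis
    by (simp add: X_def Y_def N_def)
qed (use p_ge_3 in \<open>simp add: binomial_eq_0\<close>)

lemma lemma3p2_of_nat:
  fixes a b \<alpha> \<beta> t :: nat and m l :: int
  assumes "\<not> p dvd a" "\<not> p dvd b" "\<alpha> \<ge> 1" "t \<ge> 1"
    and "m = int (p ^ \<alpha> * a)" "l = int (p ^ \<beta> * b)"
  shows "int p ^ (2 * \<alpha>) dvd
           ibinom m (nat l) * ibinom (m * int t + l - 1) (nat (m - 1))
           - (if \<beta> = 0 then 0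
              else ibinom (m div int p) (nat (l div int p))
                   * ibinom ((m * int t + l) div int p - 1) (nat (m div int p - 1)))"
proof -
  define M where "M = p ^ (\<alpha> - 1) * a"
  have pM: "p ^ \<alpha> * a = p * M"
    using assms(3) by (simp add: M_def power_eq_if)
  have "a > 0"
    by (rule ccontr) (use assms(1) in simp)
  then have "M \<ge> 1"
    using p_ge_3 by (simp add: M_def Suc_le_eq)
  have args: "nat l = p ^ \<beta> * b" "nat (m - 1) = p * M - 1" "m = int (p * M)"
    using \<open>M \<ge> 1\<close> p_ge_3 by (simp_all add: assms(5,6) pM nat_diff_distrib flip: of_nat_mult of_nat_power)
  have first: "ibinom m (nat l) * ibinom (m * int t + l - 1) (nat (m - 1))
      = int ((p * M choose p ^ \<beta> * b) * ((p * M * t + p ^ \<beta> * b - 1) choose (p * M - 1)))"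
    unfolding args(1,2) unfolding args(3) assms(6)
    by (rule ibinom_product_eq_binomial) (use \<open>M \<ge> 1\<close> \<open>t \<ge> 1\<close> p_ge_3 in simp_all)
  show ?thesis
  proof (cases "\<beta> = 0")
    case True
    have "p ^ (2 * (\<alpha> - 0)) dvd (p ^ \<alpha> * a choose p ^ 0 * b) * ((p ^ \<alpha> * a * t + p ^ 0 * b - 1) choose (p ^ \<alpha> * a - 1))"
      by (rule prime_power_dvd_binomial_product[OF prime refl refl assms(1,2)])
    then show ?thesis
      using True by (simp add: first pM int_power_dvd_int_iff[symmetric])
  next
    case False
    define L where "L = p ^ (\<beta> - 1) * b"
    have pL: "p ^ \<beta> * b = p * L"
      using False by (simp add: L_def power_eq_if)
    have "m = int p * int M" "l = int p * int L"
      unfolding assms(5,6) pM pL by simp_all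
    then have "ibinom (m div int p) (nat (l div int p))
                 * ibinom ((m * int t + l) div int p - 1) (nat (m div int p - 1))
        = int ((M choose L) * ((M * t + L - 1) choose (M - 1)))"
      using p_ge_3 \<open>M \<ge> 1\<close> \<open>t \<ge> 1\<close> by (intro ibinom_product_div_eq_binomial) simp_all
    moreover have "p * M * t + p * L = p * (M * t + L)"
      by (simp add: algebra_simps)
    ultimately show ?thesis
      using binomial_product_congruence[OF M_def L_def assms(1,2,4)] False assms(3)
      by (simp add: first pL)
  qed
qed

end

theorem lemma3p2:
  fixes p a b \<alpha> \<beta> :: nat and \<tau> m l :: int
  assumes "prime p" and "odd p"
    and "a > 0" and "b > 0" and "\<not> p dvd a" and "\<not> p dvd b"
    and "\<alpha> \<ge> 1"
    and "m = int (p ^ \<alpha> * a)" and "l = int (p ^ \<beta> * b)"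
  shows "(int p) ^ (2 * \<alpha>) dvd
           ibinom m (nat l) * ibinom (m * \<tau> + l - 1) (nat (m - 1))
           - (if \<beta> = 0 then 0
              else ibinom (m div int p) (nat (l div int p))
                   * ibinom ((m * \<tau> + l) div int p - 1) (nat (m div int p - 1)))"
proof -
  interpret odd_prime p
    using assms(1,2) by unfold_locales
  define Q where "Q = int p ^ (2 * \<alpha>)"
  define B where "B x = ibinom (m * x + l - 1) (nat (m - 1))" for x
  define C where "C x = (if \<beta> = 0 then 0
      else ibinom (m div int p) (nat (l div int p))
           * ibinom ((m * x + l) div int p - 1) (nat (m div int p - 1)))" for x
  have "fact (nat m) * Q > 0"
    using p_ge_3 by (simp add: Q_def)
  then obtain t d where "t \<ge> 1" and t: "int t = \<tau> + fact (nat m) * Q * d"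
    by (rule pos_representative)
  have "Q dvd ibinom m (nat l) * B (int t) - C (int t)"
    unfolding B_def C_def Q_def by (rule lemma3p2_of_nat) (use assms \<open>t \<ge> 1\<close> in auto)
  moreover have "Q dvd B (int t) - B \<tau>"
    unfolding B_def t by (rule ibinom_upper_periodic)
  moreover have "int p dvd m" "m \<ge> 0"
    using assms(7,8) by (simp_all add: dvd_power dvd_mult2)
  then have "Q dvd C (int t) - C \<tau>"
    unfolding C_def t using p_ge_3 ibinom_upper_div_periodic
    by (simp add: right_diff_distrib[symmetric] dvd_mult)
  ultimately show ?thesis
    using dvd_diff_transfer unfolding B_def C_def Q_def by blast
qed

end
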